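(* Let $m\ge 1$ and let $u,v,p,q\in\mathbb{R}[x,y,z,w]$ be homogeneous polynomials, all of degree $m$, such that $yp=zv$ and $yq=wv$. Define $F:\mathbb{R}^4\to\mathbb{R}^4$ by $F(x,y,z,w)=(u,v,p,q)$. Then at every point of $\mathbb{R}^4$ with $y\neq 0$, $$|J(F)| = \frac{m\,v^2\,(v\,u_x-u\,v_x)}{y^3},$$ where $|J(F)|$ is the determinant of the Jacobian matrix of $F$ and subscripts denote partial derivatives.
   Context: For $F=(F_1,F_2,F_3,F_4):\mathbb{R}^4\to\mathbb{R}^4$ in the variables $(x_1,x_2,x_3,x_4)=(x,y,z,w)$, $J(F)$ denotes the $4\times 4$ matrix $[\partial F_i/\partial x_j]$ and $|J(F)|$ its determinant. *)

theory Defs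
  imports "HOL-Analysis.Analysis"
begin

text \<open>Points of R^4 are vectors X :: real^4 with coordinates
  x = X$1, y = X$2, z = X$3, w = X$4.\<close>

definition hom_poly4 :: "nat \<Rightarrow> (real^4 \<Rightarrow> real) \<Rightarrow> bool" where
  "hom_poly4 m f \<longleftrightarrow>
     (\<exists>S :: (nat \<times> nat \<times> nat \<times> nat) set. \<exists>c :: nat \<times> nat \<times> nat \<times> nat \<Rightarrow> real.
        finite S \<and> (\<forall>(a,b,k,l)\<in>S. a + b + k + l = m) \<and>
        (\<forall>X. f X = (\<Sum>(a,b,k,l)\<in>S. c (a,b,k,l) * (X$1)^a * (X$2)^b * (X$3)^k * (X$4)^l)))"

definition partial4 :: "(real^4 \<Rightarrow> real) \<Rightarrow> 4 \<Rightarrow> real^4 \<Rightarrow> real" where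
  "partial4 f j X = deriv (\<lambda>t. f (X + t *\<^sub>R axis j 1)) 0"

definition jacobian4 :: "(real^4 \<Rightarrow> real^4) \<Rightarrow> real^4 \<Rightarrow> real^4^4" where
  "jacobian4 F X = (\<chi> i j. partial4 (\<lambda>Y. F Y $ i) j X)"

end

theory Submission
  imports Defs
begin

text \<open>Euler's identity gives \<open>X \<bullet> \<nabla>u = m u\<close> and \<open>X \<bullet> \<nabla>v = m v\<close>, and differentiating
  \<open>y p = z v\<close> and \<open>y q = w v\<close> expresses the rows \<open>\<nabla>p\<close>, \<open>\<nabla>q\<close> of the Jacobian through \<open>\<nabla>v\<close>:
  \<open>y \<nabla>p = z \<nabla>v + v e\<^sub>3 - p e\<^sub>2\<close> and \<open>y \<nabla>q = w \<nabla>v + v e\<^sub>4 - q e\<^sub>2\<close>. Subtracting multiples of the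
  second row leaves the rows \<open>(v/y\<^sup>2)(y e\<^sub>3 - z e\<^sub>2)\<close> and \<open>(v/y\<^sup>2)(y e\<^sub>4 - w e\<^sub>2)\<close>; replacing the
  second column by \<open>X\<close>-weighted column sums then turns it into \<open>(m u, m v, 0, 0)\<close>, and the
  determinant collapses to \<open>m v\<^sup>2 (v u\<^sub>x - u v\<^sub>x) / y\<^sup>3\<close>.\<close>

lemma det_4:
  "det (A::'a::comm_ring_1^4^4) =
 A$1$1*(A$2$2*A$3$3*A$4$4 + A$2$3*A$3$4*A$4$2 + A$2$4*A$3$2*A$4$3 - A$2$2*A$3$4*A$4$3 - A$2$3*A$3$2*A$4$4 - A$2$4*A$3$3*A$4$2)
-A$1$2*(A$2$1*A$3$3*A$4$4 + A$2$3*A$3$4*A$4$1 + A$2$4*A$3$1*A$4$3 - A$2$1*A$3$4*A$4$3 - A$2$3*A$3$1*A$4$4 - A$2$4*A$3$3*A$4$1)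
+A$1$3*(A$2$1*A$3$2*A$4$4 + A$2$2*A$3$4*A$4$1 + A$2$4*A$3$1*A$4$2 - A$2$1*A$3$4*A$4$2 - A$2$2*A$3$1*A$4$4 - A$2$4*A$3$2*A$4$1)
-A$1$4*(A$2$1*A$3$2*A$4$3 + A$2$2*A$3$3*A$4$1 + A$2$3*A$3$1*A$4$2 - A$2$1*A$3$3*A$4$2 - A$2$2*A$3$1*A$4$3 - A$2$3*A$3$2*A$4$1)"
proof -
  have f1: "finite {2::4, 3, 4}" "1 \<notin> {2::4, 3, 4}"
    and f2: "finite {3::4, 4}" "2 \<notin> {3::4, 4}"
    and f3: "finite {4::4}" "3 \<notin> {4::4}" by auto
  show ?thesis
    unfolding det_def UNIV_4 sum_over_permutations_insert[OF f1] sum_over_permutations_insert[OF f2]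
      sum_over_permutations_insert[OF f3] permutes_sing
    by (simp add: sign_swap_id permutation_swap_id sign_compose permutation_compose sign_id
        swap_id_eq algebra_simps)
qed

lemma det_4_euler_rows:
  fixes J :: "real^4^4" and m x y z w u v p q :: real
  assumes y: "y \<noteq> 0"
    and euler_u: "x * J$1$1 + y * J$1$2 + z * J$1$3 + w * J$1$4 = m * u"
    and euler_v: "x * J$2$1 + y * J$2$2 + z * J$2$3 + w * J$2$4 = m * v"
    and p: "y * p = z * v" and q: "y * q = w * v"
    and row3: "\<And>j. (if j = 2 then p else 0) + y * J$3$j = (if j = 3 then v else 0) + z * J$2$j"
    and row4: "\<And>j. (if j = 2 then q else 0) + y * J$4$j = (if j = 4 then v else 0) + w * J$2$j"
  shows "det J = m * v^2 * (v * J$1$1 - u * J$2$1) / y^3"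
proof -
  have J12: "J$1$2 = (m * u - x * J$1$1 - z * J$1$3 - w * J$1$4) / y"
   and J22: "J$2$2 = (m * v - x * J$2$1 - z * J$2$3 - w * J$2$4) / y"
    using euler_u euler_v y by (simp_all add: field_simps)
  have pq: "p = z * v / y" "q = w * v / y"
    using p q y by (simp_all add: field_simps)
  have J3: "J$3$1 = z * J$2$1 / y" "J$3$2 = (z * J$2$2 - p) / y"
      "J$3$3 = (v + z * J$2$3) / y" "J$3$4 = z * J$2$4 / y"
    using row3[of 1] row3[of 2] row3[of 3] row3[of 4] y by (simp_all add: field_simps)
  have J4: "J$4$1 = w * J$2$1 / y" "J$4$2 = (w * J$2$2 - q) / y"
      "J$4$3 = w * J$2$3 / y" "J$4$4 = (v + w * J$2$4) / y"
    using row4[of 1] row4[of 2] row4[of 3] row4[of 4] y by (simp_all add: field_simps)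
  show ?thesis
    unfolding det_4 J3 J4 pq J12 J22 using y by (simp add: field_simps) algebra
qed

lemma hom_poly4_differentiable:
  assumes "hom_poly4 m f"
  shows "f differentiable (at X)"
proof -
  obtain S c where "finite S"
    and f: "f = (\<lambda>X. \<Sum>(a,b,k,l)\<in>S. c (a,b,k,l) * (X$1)^a * (X$2)^b * (X$3)^k * (X$4)^l)"
    using assms unfolding hom_poly4_def by blast
  then show ?thesis
    unfolding f case_prod_beta
    by (intro differentiable_sum differentiable_mult differentiable_power differentiable_const
        bounded_linear_imp_differentiable bounded_linear_vec_nth ballI)
qed

lemma hom_poly4_scaleR:
  assumes "hom_poly4 m f"
  shows "f (t *\<^sub>R X) = t^m * f X"
proof -
  obtain S c where S: "\<forall>(a,b,k,l)\<in>S. a + b + k + l = m"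
    and f: "\<And>X. f X = (\<Sum>(a,b,k,l)\<in>S. c (a,b,k,l) * (X$1)^a * (X$2)^b * (X$3)^k * (X$4)^l)"
    using assms unfolding hom_poly4_def by blast
  have "f (t *\<^sub>R X) = (\<Sum>(a,b,k,l)\<in>S. t^m * (c (a,b,k,l) * (X$1)^a * (X$2)^b * (X$3)^k * (X$4)^l))"
    unfolding f using S
    by (intro sum.cong refl) (auto simp: power_mult_distrib power_add)
  also have "\<dots> = t^m * f X"
    by (simp add: f sum_distrib_left case_prod_beta)
  finally show ?thesis .
qed

lemma partial4_eq_has_derivative:
  assumes "(f has_derivative D) (at X)"
  shows "partial4 f j X = D (axis j 1)"
proof -
  have line: "((\<lambda>t. X + t *\<^sub>R axis j 1) has_derivative (\<lambda>t. t *\<^sub>R axis j 1)) (at 0)"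
    by (auto intro!: derivative_eq_intros)
  have "((\<lambda>t. f (X + t *\<^sub>R axis j 1)) has_derivative (\<lambda>t. D (t *\<^sub>R axis j 1))) (at 0)"
    using has_derivative_compose[OF line] assms by simp
  moreover have "(\<lambda>t. D (t *\<^sub>R axis j 1)) = (*) (D (axis j 1))"
    using has_derivative_linear[OF assms] by (auto simp: linear_scale)
  ultimately have "((\<lambda>t. f (X + t *\<^sub>R axis j 1)) has_real_derivative D (axis j 1)) (at 0)"
    by (simp add: has_field_derivative_def)
  then show ?thesis
    unfolding partial4_def by (rule DERIV_imp_deriv)
qed

lemma partial4_coordinate_mult:
  assumes "f differentiable (at X)"
  shows "partial4 (\<lambda>Y. Y$i * f Y) j X = (if j = i then f X else 0) + X$i * partial4 f j X"
proof -
  obtain D where D: "(f has_derivative D) (at X)"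
    using assms unfolding differentiable_def by blast
  have "((\<lambda>Y. Y$i * f Y) has_derivative (\<lambda>h. X$i * D h + h$i * f X)) (at X)"
    by (intro has_derivative_mult D bounded_linear_imp_has_derivative bounded_linear_vec_nth)
  then show ?thesis
    using partial4_eq_has_derivative[OF D, of j]
    by (simp add: partial4_eq_has_derivative axis_def)
qed

lemma hom_poly4_euler:
  assumes "hom_poly4 m f"
  shows "X$1 * partial4 f 1 X + X$2 * partial4 f 2 X + X$3 * partial4 f 3 X + X$4 * partial4 f 4 X
         = real m * f X"
proof -
  obtain D where D: "(f has_derivative D) (at X)"
    using hom_poly4_differentiable[OF assms] unfolding differentiable_def by blast
  have lin: "linear D"
    using has_derivative_linear[OF D] .
  have "X = X$1 *\<^sub>R axis 1 1 + X$2 *\<^sub>R axis 2 1 + X$3 *\<^sub>R axis 3 1 + X$4 *\<^sub>R axis 4 1"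
    by (simp add: vec_eq_iff forall_4 axis_def)
  then have DX: "D X = X$1 * D (axis 1 1) + X$2 * D (axis 2 1) + X$3 * D (axis 3 1) + X$4 * D (axis 4 1)"
    by (metis linear_add[OF lin] linear_scale[OF lin] real_scaleR_def)
  have ray: "((\<lambda>t. t *\<^sub>R X) has_derivative (\<lambda>s. s *\<^sub>R X)) (at 1)"
    by (auto intro!: derivative_eq_intros)
  have "((\<lambda>t. f (t *\<^sub>R X)) has_derivative (\<lambda>s. D (s *\<^sub>R X))) (at 1)"
    using has_derivative_compose[OF ray] D by simp
  moreover have "(\<lambda>s. D (s *\<^sub>R X)) = (*) (D X)"
    using lin by (auto simp: linear_scale)
  ultimately have "((\<lambda>t. f (t *\<^sub>R X)) has_real_derivative D X) (at 1)"
    by (simp add: has_field_derivative_def)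
  moreover have "((\<lambda>t. f (t *\<^sub>R X)) has_real_derivative real m * f X) (at 1)"
    unfolding hom_poly4_scaleR[OF assms] by (auto intro!: derivative_eq_intros)
  ultimately have "D X = real m * f X"
    by (rule DERIV_unique)
  then show ?thesis
    using DX by (simp add: partial4_eq_has_derivative[OF D])
qed

theorem lemma3p1:
  fixes m :: nat and u v p q :: "real^4 \<Rightarrow> real" and X :: "real^4"
  assumes "m \<ge> 1"
    and "hom_poly4 m u" and "hom_poly4 m v" and "hom_poly4 m p" and "hom_poly4 m q"
    and "\<forall>Y. Y$2 * p Y = Y$3 * v Y"
    and "\<forall>Y. Y$2 * q Y = Y$4 * v Y"
    and "X$2 \<noteq> 0"
  shows "det (jacobian4 (\<lambda>Y. \<chi> i. if i = 1 then u Y else if i = 2 then v Y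
                                     else if i = 3 then p Y else q Y) X)
         = real m * (v X)^2 * (v X * partial4 u 1 X - u X * partial4 v 1 X) / (X$2)^3"
proof -
  have dv: "v differentiable (at X)" and dp: "p differentiable (at X)"
    and dq: "q differentiable (at X)"
    using assms(3-5) by (simp_all add: hom_poly4_differentiable)
  have "partial4 (\<lambda>Y. Y$2 * p Y) j X = partial4 (\<lambda>Y. Y$3 * v Y) j X" for j
    using assms(6) by simp
  then have row3: "(if j = 2 then p X else 0) + X$2 * partial4 p j X
                   = (if j = 3 then v X else 0) + X$3 * partial4 v j X" for j
    by (simp add: partial4_coordinate_mult dp dv)
  have "partial4 (\<lambda>Y. Y$2 * q Y) j X = partial4 (\<lambda>Y. Y$4 * v Y) j X" for j
    using assms(7) by simp
  then have row4: "(if j = 2 then q X else 0) + X$2 * partial4 q j X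
                   = (if j = 4 then v X else 0) + X$4 * partial4 v j X" for j
    by (simp add: partial4_coordinate_mult dq dv)
  let ?J = "jacobian4 (\<lambda>Y. \<chi> i. if i = 1 then u Y else if i = 2 then v Y
                                   else if i = 3 then p Y else q Y) X"
  have J: "?J$1$j = partial4 u j X" "?J$2$j = partial4 v j X"
    "?J$3$j = partial4 p j X" "?J$4$j = partial4 q j X" for j
    by (simp_all add: jacobian4_def)
  have "det ?J = real m * (v X)^2 * (v X * ?J$1$1 - u X * ?J$2$1) / (X$2)^3"
    using hom_poly4_euler[OF assms(2), of X] hom_poly4_euler[OF assms(3), of X]
      assms(6,7) row3 row4
    by (intro det_4_euler_rows[OF assms(8), where x = "X$1" and z = "X$3" and w = "X$4"
          and p = "p X" and q = "q X"]) (simp_all add: J)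
  then show ?thesis
    by (simp only: J)
qed

end
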